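(* Let $T>0$ with $T/\pi\in\mathbb Q$. Let $u:\mathbb R\to L^2_{r,0}$, $u(t)=\mathcal S(t)u_0$, be a solution of the Benjamin–Ono equation with $u_0\in L^2_{r,0}$, and assume $u$ is $T$-periodic, i.e. $u(t+T)=u(t)$ for all $t\in\mathbb R$. Then $u_0$ is a finite gap potential, i.e. there is $N\ge1$ with $\zeta_n(u_0)=0$ for all $n>N$.
   Context: $\mathbb T=\mathbb R/2\pi\mathbb Z$. For $s\in\mathbb R$, $H^s_{r,0}$ is the Sobolev space of real-valued distributions $u$ on $\mathbb T$ with $H^s$-regularity and zero mean ($\hat u(0)=0$); $L^2_{r,0}=H^0_{r,0}$. The Benjamin–Ono (BO) equation is $\partial_tu=H\partial_x^2u-\partial_x(u^2)$, where $H$ is the Hilbert transform, the Fourier multiplier $\hat f(n)\mapsto -i\,\mathrm{sign}(n)\hat f(n)$ (with $0$ at $n=0$). For $\sigma\in\mathbb R$, $h^\sigma_+$ is the space of complex sequences $(z_n)_{n\ge1}$ with $\sum_{n\ge1}n^{2\sigma}|z_n|^2<\infty$. The following known facts are taken as given: for every $s>-1/2$ the BO equation is globally well posed in $H^s_{r,0}$ with continuous solution map $\mathcal S(t)$; there is a map $\Phi:u\mapsto(\zeta_n(u))_{n\ge1}$ (Birkhoff coordinates) which for every $s>-1/2$ is a homeomorphism $H^s_{r,0}\to h^{s+1/2}_+$ (in particular $u\in H^s_{r,0}$ iff $\Phi(u)\in h_+^{s+1/2}$), and for all $u\in H^s_{r,0}$, $n\ge1$, $t\in\mathbb R$, $\zeta_n(\mathcal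 S(t)u)=e^{i\omega_nt}\zeta_n(u)$ with $\omega_n=n^2-2\sum_{k=1}^nk|\zeta_k(u)|^2-2n\sum_{k>n}|\zeta_k(u)|^2$. *)

theory Defs
  imports "HOL-Analysis.Analysis"
begin

text \<open>L^2_{r,0}, represented through Fourier coefficients (Plancherel):
  a sequence c : int -> complex with c 0 = 0 (zero mean), c(-n) = cnj (c n)
  (real valued) and square summable.\<close>
definition L2r0 :: "(int \<Rightarrow> complex) set" where
  "L2r0 = {c. c 0 = 0 \<and> (\<forall>n. c (- n) = cnj (c n)) \<and>
              summable (\<lambda>n::nat. (cmod (c (int n)))\<^sup>2)}"

text \<open>h^sigma_+ : sequences indexed by n >= 1 (index 0 unused and set to 0).\<close>
definition h_plus :: "real \<Rightarrow> (nat \<Rightarrow> complex) set" where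
  "h_plus \<sigma> = {z. z 0 = 0 \<and>
      summable (\<lambda>n::nat. real (Suc n) powr (2 * \<sigma>) * (cmod (z (Suc n)))\<^sup>2)}"

definition bo_freq :: "(nat \<Rightarrow> complex) \<Rightarrow> nat \<Rightarrow> real" where
  "bo_freq z n = real n ^ 2
     - 2 * (\<Sum>k=1..n. real k * (cmod (z k))\<^sup>2)
     - 2 * real n * (\<Sum>k. if n < k then (cmod (z k))\<^sup>2 else 0)"

end

theory Submission
  imports Defs
begin

text \<open>Write \<open>\<omega>\<^sub>n = n\<^sup>2 - 2 F n\<close> with \<open>F n = \<Sum>\<^sub>k min k n |\<zeta>\<^sub>k|\<^sup>2\<close>. Periodicity with period
  \<open>T = \<pi> a / b\<close> forces \<open>\<omega>\<^sub>n T \<in> 2\<pi>\<int>\<close> whenever \<open>\<zeta>\<^sub>n \<noteq> 0\<close>, hence \<open>2 a F n \<in> \<int>\<close>. On the support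
  of \<open>\<zeta>\<close> the map \<open>F\<close> is strictly increasing, and it is bounded by \<open>\<Sum>\<^sub>k k |\<zeta>\<^sub>k|\<^sup>2 < \<infinity>\<close>,
  the \<open>h\<^sup>1\<^sup>/\<^sup>2\<^sub>+\<close> norm. A strictly increasing sequence of integers in a bounded interval is
  finite, so the support is finite.\<close>

definition min_weighted_sum :: "(nat \<Rightarrow> real) \<Rightarrow> nat \<Rightarrow> real" where
  "min_weighted_sum c n = (\<Sum>k. real (min k n) * c k)"

lemma summable_min_weighted:
  fixes c :: "nat \<Rightarrow> real"
  assumes "summable (\<lambda>k. real k * c k)" and "\<And>k. c k \<ge> 0"
  shows "summable (\<lambda>k. real (min k n) * c k)"
  by (rule summable_comparison_test[OF _ assms(1)])
     (auto intro!: exI[of _ 0] mult_right_mono simp: assms(2))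

lemma min_weighted_sum_bounds:
  fixes c :: "nat \<Rightarrow> real"
  assumes "summable (\<lambda>k. real k * c k)" and "\<And>k. c k \<ge> 0"
  shows "0 \<le> min_weighted_sum c n" and "min_weighted_sum c n \<le> (\<Sum>k. real k * c k)"
  unfolding min_weighted_sum_def
  using summable_min_weighted[OF assms] assms
  by (auto intro!: suminf_nonneg suminf_le mult_right_mono)

lemma min_weighted_sum_less:
  fixes c :: "nat \<Rightarrow> real"
  assumes sc: "summable (\<lambda>k. real k * c k)" and nn: "\<And>k. c k \<ge> 0"
    and "n < m" and "c m > 0"
  shows "min_weighted_sum c n < min_weighted_sum c m"
proof -
  let ?d = "\<lambda>k. real (min k m) * c k - real (min k n) * c k"
  have d_nonneg: "0 \<le> ?d k" for k
    using \<open>n < m\<close> nn[of k] by (auto intro!: mult_right_mono)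
  have "0 < (real m - real n) * c m"
    using assms(3,4) by simp
  also have "\<dots> = (\<Sum>k\<in>{m}. ?d k)"
    using \<open>n < m\<close> by (simp add: algebra_simps)
  also have "\<dots> \<le> (\<Sum>k. ?d k)"
    using d_nonneg
    by (intro sum_le_suminf summable_diff summable_min_weighted[OF sc nn]) auto
  also have "\<dots> = min_weighted_sum c m - min_weighted_sum c n"
    unfolding min_weighted_sum_def
    by (rule suminf_diff[symmetric]; rule summable_min_weighted[OF sc nn])
  finally show ?thesis by simp
qed

lemma bo_freq_eq_min_weighted_sum:
  fixes z :: "nat \<Rightarrow> complex"
  assumes sc: "summable (\<lambda>k. (cmod (z k))\<^sup>2)"
  shows "bo_freq z n = real n ^ 2 - 2 * min_weighted_sum (\<lambda>k. (cmod (z k))\<^sup>2) n"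
proof -
  let ?c = "\<lambda>k. (cmod (z k))\<^sup>2"
  let ?tail = "\<lambda>k. if n < k then ?c k else 0"
  have split: "(\<lambda>k. real (min k n) * ?c k)
      = (\<lambda>k. (if k \<le> n then real k * ?c k else 0) + real n * ?tail k)"
    by (auto simp: min_def)
  have head_summable: "summable (\<lambda>k. if k \<le> n then real k * ?c k else 0)"
    by (rule summable_finite[of "{..n}"]) auto
  have tail_summable: "summable ?tail"
    by (rule summable_comparison_test[OF _ sc]) (auto intro!: exI[of _ 0])
  have "(\<Sum>k. if k \<le> n then real k * ?c k else 0) = (\<Sum>k\<in>{..n}. real k * ?c k)"
    by (subst suminf_finite[of "{..n}"]) auto
  also have "\<dots> = (\<Sum>k=1..n. real k * ?c k)"
    by (simp add: atMost_atLeast0 sum.atLeast_Suc_atMost)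
  finally have head: "(\<Sum>k. if k \<le> n then real k * ?c k else 0) = (\<Sum>k=1..n. real k * ?c k)" .
  have "min_weighted_sum ?c n = (\<Sum>k=1..n. real k * ?c k) + real n * (\<Sum>k. ?tail k)"
    unfolding min_weighted_sum_def split
    using suminf_add[OF head_summable summable_mult[OF tail_summable]]
      suminf_mult[OF tail_summable] head by simp
  then show ?thesis unfolding bo_freq_def by simp
qed

lemma h_plus_half_summable:
  assumes "z \<in> h_plus (1/2)"
  shows "summable (\<lambda>k. real k * (cmod (z k))\<^sup>2)" and "summable (\<lambda>k. (cmod (z k))\<^sup>2)"
proof -
  have weighted: "summable (\<lambda>k. real (Suc k) * (cmod (z (Suc k)))\<^sup>2)"
    using assms by (simp add: h_plus_def)
  then show "summable (\<lambda>k. real k * (cmod (z k))\<^sup>2)"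
    by (subst summable_Suc_iff[symmetric]) simp
  have "summable (\<lambda>k. (cmod (z (Suc k)))\<^sup>2)"
    by (rule summable_comparison_test[OF _ weighted])
       (auto intro!: exI[of _ 0] simp: mult_le_cancel_right1)
  then show "summable (\<lambda>k. (cmod (z k))\<^sup>2)"
    by (subst summable_Suc_iff[symmetric])
qed

lemma exp_fixes_nonzero_imp:
  fixes x :: real and w :: complex
  assumes "exp (\<i> * complex_of_real x) * w = w" and "w \<noteq> 0"
  shows "\<exists>k::int. x = of_int (2 * k) * pi"
proof -
  have "exp (\<i> * complex_of_real x) = 1"
    using assms by (metis mult_cancel_right1)
  then show ?thesis by (simp add: exp_eq_1)
qed

lemma finite_if_strict_mono_on_bounded_Ints:
  fixes h :: "nat \<Rightarrow> real"
  assumes "strict_mono_on Z h" and "\<And>n. n \<in> Z \<Longrightarrow> h n \<in> \<int> \<and> 0 \<le> h n \<and> h n \<le> B"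
  shows "finite Z"
proof -
  have "h ` Z \<subseteq> of_int ` {0..\<lceil>B\<rceil>}"
  proof
    fix x assume "x \<in> h ` Z"
    then obtain n where n: "n \<in> Z" "x = h n" by auto
    then obtain m where m: "h n = of_int m" using assms(2) by (metis Ints_cases)
    have "m \<le> \<lceil>B\<rceil>" and "0 \<le> m"
      using assms(2)[OF n(1)] m le_of_int_ceiling[of B] by linarith+
    then show "x \<in> of_int ` {0..\<lceil>B\<rceil>}" using n m by auto
  qed
  then have "finite (h ` Z)" by (rule finite_subset) auto
  then show ?thesis
    using finite_imageD strict_mono_on_imp_inj_on[OF assms(1)] by blast
qed

lemma resonance_imp_Ints:
  fixes a b k :: int and \<omega> F :: real
  assumes "\<omega> = real n ^ 2 - 2 * F" and "b > 0"
    and "\<omega> * (pi * of_int a / of_int b) = of_int (2 * k) * pi"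
  shows "2 * F * of_int a \<in> \<int>"
proof -
  have "\<omega> * of_int a = 2 * of_int k * of_int b"
    using assms(2,3) by (simp add: field_simps)
  then have "2 * F * of_int a = of_int (int n ^ 2 * a - 2 * k * b)"
    using assms(1) by (simp add: algebra_simps)
  then show ?thesis by simp
qed

lemma finite_support_if_integral_actions:
  fixes z :: "nat \<Rightarrow> complex" and a :: int
  defines "c \<equiv> \<lambda>k. (cmod (z k))\<^sup>2"
  assumes "z \<in> h_plus (1/2)" and "a > 0"
    and "\<And>n. n \<ge> 1 \<Longrightarrow> z n \<noteq> 0 \<Longrightarrow> 2 * min_weighted_sum c n * of_int a \<in> \<int>"
  shows "finite {n. 1 \<le> n \<and> z n \<noteq> 0}"
proof -
  have summ: "summable (\<lambda>k. real k * c k)"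
    using h_plus_half_summable(1)[OF assms(2)] unfolding c_def .
  have c_nonneg: "c k \<ge> 0" for k by (simp add: c_def)
  have "strict_mono_on {n. 1 \<le> n \<and> z n \<noteq> 0} (\<lambda>n. 2 * min_weighted_sum c n * of_int a)"
    using \<open>a > 0\<close> min_weighted_sum_less[OF summ c_nonneg]
    by (auto intro!: strict_mono_onI simp: c_def)
  then show ?thesis
    using min_weighted_sum_bounds[OF summ c_nonneg] \<open>a > 0\<close> assms(4)
    by (intro finite_if_strict_mono_on_bounded_Ints[where B = "2 * (\<Sum>k. real k * c k) * of_int a"])
       auto
qed

lemma finite_support_imp_eventually_zero:
  fixes z :: "nat \<Rightarrow> 'a::zero"
  assumes "finite {n. 1 \<le> n \<and> z n \<noteq> 0}"
  shows "\<exists>N\<ge>1. \<forall>n>N. z n = 0"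
proof (intro exI conjI allI impI)
  let ?N = "Max (insert 1 {n. 1 \<le> n \<and> z n \<noteq> 0})"
  show "1 \<le> ?N" using assms by simp
  fix n assume "n > ?N"
  moreover have "n \<le> ?N" if "z n \<noteq> 0"
    using that \<open>n > ?N\<close> assms by (intro Max_ge) auto
  ultimately show "z n = 0" by linarith
qed

theorem theorem3p1:
  fixes S :: "real \<Rightarrow> (int \<Rightarrow> complex) \<Rightarrow> (int \<Rightarrow> complex)"
    and \<zeta> :: "(int \<Rightarrow> complex) \<Rightarrow> nat \<Rightarrow> complex"
    and u :: "real \<Rightarrow> (int \<Rightarrow> complex)"
    and u0 :: "int \<Rightarrow> complex"
    and T :: real
  assumes flow_maps: "\<forall>t. \<forall>v\<in>L2r0. S t v \<in> L2r0"
    and flow_zero: "\<forall>v\<in>L2r0. S 0 v = v"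
    and Phi_bij: "bij_betw \<zeta> L2r0 (h_plus (1/2))"
    and Phi_evol: "\<forall>v\<in>L2r0. \<forall>n\<ge>1. \<forall>t.
          \<zeta> (S t v) n = exp (\<i> * complex_of_real (bo_freq (\<zeta> v) n * t)) * \<zeta> v n"
    and T_pos: "T > 0"
    and T_rat: "T / pi \<in> \<rat>"
    and u0_in: "u0 \<in> L2r0"
    and u_sol: "\<forall>t. u t = S t u0"
    and u_per: "\<forall>t. u (t + T) = u t"
  shows "\<exists>N\<ge>1. \<forall>n>N. \<zeta> u0 n = 0"
proof (rule finite_support_imp_eventually_zero)
  have "\<zeta> u0 \<in> h_plus (1/2)" using Phi_bij u0_in by (rule bij_betw_apply)
  note freq = bo_freq_eq_min_weighted_sum[OF h_plus_half_summable(2)[OF this]]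
  have fixed: "S T u0 = u0" using u_sol u_per[rule_format, of 0] flow_zero u0_in by auto
  obtain a b :: int where "b > 0" and T_eq: "T = pi * of_int a / of_int b"
    using T_rat by (elim Rats_cases') (auto simp: field_simps)
  then have "a > 0" using T_pos by (simp add: zero_less_divide_iff zero_less_mult_iff)
  show "finite {n. 1 \<le> n \<and> \<zeta> u0 n \<noteq> 0}"
  proof (rule finite_support_if_integral_actions[OF \<open>\<zeta> u0 \<in> h_plus (1/2)\<close> \<open>a > 0\<close>])
    fix n :: nat assume "n \<ge> 1" and "\<zeta> u0 n \<noteq> 0"
    have "exp (\<i> * complex_of_real (bo_freq (\<zeta> u0) n * T)) * \<zeta> u0 n = \<zeta> u0 n"
      using Phi_evol u0_in fixed \<open>n \<ge> 1\<close> by metis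
    then have "\<exists>k::int. bo_freq (\<zeta> u0) n * T = of_int (2 * k) * pi"
      using \<open>\<zeta> u0 n \<noteq> 0\<close> by (rule exp_fixes_nonzero_imp)
    then show "2 * min_weighted_sum (\<lambda>k. (cmod (\<zeta> u0 k))\<^sup>2) n * of_int a \<in> \<int>"
      using \<open>b > 0\<close> by (auto simp: T_eq intro: resonance_imp_Ints[OF freq])
  qed
qed

end
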